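(* Let $b\ge2$ and let $d$ be a base-$b$ martingale with $d(\lambda)=1$ and $d(w)\le |w|^c$ for all nonempty $w$. Then there is $c'>0$ such that for every sufficiently long $y\in\{0,1\}^*$, with $m(y)=\lceil |y|/\log_2 b+c'\log_2|y|\rceil$, \[|d^{(2)}(y)-d^{(2)}_{m(y)}(y)|\le 1/|y|^3,\] where $d^{(2)}(y)=2^{|y|}\mu(y)$ and $d^{(2)}_m(y)=2^{|y|}\mu_m(y)$.
   Context: $\Sigma_b=\{0,\dots,b-1\}$. A base-$b$ martingale is $d:\Sigma_b^*\to[0,\infty)$ with $d(w)=\frac1b\sum_{a}d(wa)$. $[w]_b=[x,x+b^{-|w|})$ with $x=\sum_{i=1}^{|w|}w[i-1]b^{-i}$, similarly $[y]_2$. $\gamma(w)=b^{-|w|}d(w)$ extends to a Borel probability measure $\hat\gamma$ on $[0,1)$ with $\hat\gamma([w]_b)=\gamma(w)$; $\mu(y)=\hat\gamma([y]_2)$; $\mu_m(y)=\sum\{\gamma(w):|w|=m,\ [w]_b\cap[y]_2\ne\emptyset\}$. *)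

theory Defs
  imports "HOL-Analysis.Analysis" "HOL-Probability.Probability"
begin

definition words :: "nat \<Rightarrow> nat list set" where
  "words b = {w. set w \<subseteq> {..<b}}"

definition words_len :: "nat \<Rightarrow> nat \<Rightarrow> nat list set" where
  "words_len b m = {w. set w \<subseteq> {..<b} \<and> length w = m}"

definition martingale :: "nat \<Rightarrow> (nat list \<Rightarrow> real) \<Rightarrow> bool" where
  "martingale b d \<longleftrightarrow>
     (\<forall>w \<in> words b. 0 \<le> d w \<and> d w = (1 / real b) * (\<Sum>a<b. d (w @ [a])))"

definition cyl :: "nat \<Rightarrow> nat list \<Rightarrow> real set" where
  "cyl b w = (let x = (\<Sum>i<length w. real (w ! i) * real b powi (- int (i + 1)))
              in {x ..< x + real b powi (- int (length w))})"

definition gam :: "nat \<Rightarrow> (nat list \<Rightarrow> real) \<Rightarrow> nat list \<Rightarrow> real" where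
  "gam b d w = real b powi (- int (length w)) * d w"

definition mu_m :: "nat \<Rightarrow> (nat list \<Rightarrow> real) \<Rightarrow> nat \<Rightarrow> nat list \<Rightarrow> real" where
  "mu_m b d m y = (\<Sum>w \<in> {w \<in> words_len b m. cyl b w \<inter> cyl 2 y \<noteq> {}}. gam b d w)"

end

theory Submission
  imports Defs "HOL-Real_Asymp.Real_Asymp"
begin

text \<open>
  For \<open>|w| = m\<close> the intervals \<open>[w]\<^sub>b\<close> partition \<open>[0,1)\<close> into cells of length \<open>b\<^sup>-\<^sup>m\<close>, and
  \<open>\<mu>\<^sub>m(y)\<close> overestimates \<open>\<mu>(y)\<close> only by the mass of the cells that straddle an endpoint of
  \<open>[y]\<^sub>2\<close>: at most two cells, each of mass \<open>\<gamma>(w) \<le> m\<^sup>c b\<^sup>-\<^sup>m\<close>.  With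
  \<open>m \<ge> |y|/log\<^sub>2 b + (|c|+5) log\<^sub>2 |y|\<close> we have \<open>b\<^sup>m \<ge> 2\<^bsup>|y|\<^esup> |y|\<^bsup>|c|+5\<^esup>\<close>, so after scaling
  by \<open>2\<^bsup>|y|\<^esup>\<close> the error is \<open>O(|y|\<^sup>-\<^sup>5)\<close>.
\<close>

fun bval :: "nat \<Rightarrow> nat list \<Rightarrow> nat" where
  "bval b [] = 0"
| "bval b (a # w) = a * b ^ length w + bval b w"

lemma bval_less: "set w \<subseteq> {..<b} \<Longrightarrow> bval b w < b ^ length w"
proof (induction w)
  case (Cons a w)
  then have "a < b" and "bval b w < b ^ length w" by auto
  then have "bval b (a # w) < (a + 1) * b ^ length w" by simp
  also have "\<dots> \<le> b * b ^ length w" using \<open>a < b\<close> by (intro mult_le_mono1) simp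
  finally show ?case by simp
qed simp

lemma bval_inj:
  "\<lbrakk>length u = length v; set u \<subseteq> {..<b}; set v \<subseteq> {..<b}; bval b u = bval b v\<rbrakk> \<Longrightarrow> u = v"
proof (induction u v rule: list_induct2)
  case (Cons a u a' v)
  have hu: "bval b u < b ^ length u" and hv: "bval b v < b ^ length u"
    using bval_less[of u b] bval_less[of v b] Cons by auto
  have e: "a * b ^ length u + bval b u = a' * b ^ length u + bval b v" using Cons by simp
  have "b ^ length u > 0" using hu by linarith
  then have "(a * b ^ length u + bval b u) div b ^ length u = a"
    and "(a' * b ^ length u + bval b v) div b ^ length u = a'" using hu hv by simp_all
  with e have "a = a'" by simp
  then show ?case using e Cons by simp
qed simp

lemma bval_surj: "\<lbrakk>b > 0; k < b ^ m\<rbrakk> \<Longrightarrow> \<exists>w. length w = m \<and> set w \<subseteq> {..<b} \<and> bval b w = k"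
proof (induction m arbitrary: k)
  case (Suc m)
  then have "k mod b ^ m < b ^ m" by simp
  then obtain w where w: "length w = m" "set w \<subseteq> {..<b}" "bval b w = k mod b ^ m"
    using Suc.IH Suc.prems(1) by blast
  have "k div b ^ m < b" using Suc.prems by (simp add: less_mult_imp_div_less mult.commute)
  moreover have "bval b ((k div b ^ m) # w) = k" using w div_mult_mod_eq[of k "b ^ m"] by simp
  ultimately show ?case using w by (intro exI[of _ "(k div b ^ m) # w"]) simp
qed simp

lemma sum_digits_eq_bval:
  "b > 0 \<Longrightarrow> (\<Sum>i<length w. real (w ! i) / real b ^ (i + 1)) = real (bval b w) / real b ^ length w"
proof (induction w)
  case (Cons a w)
  have "(\<Sum>i<length (a # w). real ((a # w) ! i) / real b ^ (i + 1))
      = real a / real b + (\<Sum>i<length w. real (w ! i) / real b ^ (i + 2))"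
    by (simp only: length_Cons sum.lessThan_Suc_shift) simp
  also have "(\<Sum>i<length w. real (w ! i) / real b ^ (i + 2))
      = (1 / real b) * (\<Sum>i<length w. real (w ! i) / real b ^ (i + 1))"
    by (simp add: sum_distrib_left)
  also have "\<dots> = (1 / real b) * (real (bval b w) / real b ^ length w)" using Cons by simp
  finally show ?case using Cons.prems by (simp add: field_simps)
qed simp

lemma cyl_eq_atLeastLessThan:
  assumes "b > 0"
  shows "cyl b w = {real (bval b w) / real b ^ length w ..< (real (bval b w) + 1) / real b ^ length w}"
proof -
  have powi: "(x::real) powi (- int k) = 1 / x ^ k" for x k
    by (simp add: power_int_minus power_int_of_nat divide_inverse)
  show ?thesis
    using sum_digits_eq_bval[OF assms, of w]
    unfolding cyl_def Let_def powi by (simp add: add_divide_distrib)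
qed

lemma mem_cyl_iff_floor:
  "b > 0 \<Longrightarrow> x \<in> cyl b w \<longleftrightarrow> \<lfloor>x * real b ^ length w\<rfloor> = int (bval b w)"
  by (simp add: cyl_eq_atLeastLessThan floor_eq_iff field_simps)

lemma cyl_subset_unit_interval: "\<lbrakk>b > 0; set w \<subseteq> {..<b}\<rbrakk> \<Longrightarrow> cyl b w \<subseteq> {0..<1}"
proof -
  assume "b > 0" "set w \<subseteq> {..<b}"
  then have "real (bval b w) + 1 \<le> real b ^ length w"
    using bval_less by (metis Suc_leI of_nat_Suc of_nat_le_iff of_nat_power add.commute)
  then show ?thesis using \<open>b > 0\<close> by (auto simp: cyl_eq_atLeastLessThan divide_le_eq_1)
qed

lemma finite_words_len: "finite (words_len b m)"
  using finite_lists_length_eq[of "{..<b}" m] by (simp add: words_len_def)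

lemma disjoint_family_cyl: "b > 0 \<Longrightarrow> disjoint_family_on (cyl b) (words_len b m)"
  unfolding disjoint_family_on_def words_len_def
  using mem_cyl_iff_floor bval_inj by (smt (verit) disjoint_iff of_nat_eq_iff mem_Collect_eq)

lemma unit_interval_subset_Union_cyl:
  assumes "b > 0"
  shows "{0..<1} \<subseteq> (\<Union>w \<in> words_len b m. cyl b w)"
proof
  fix x :: real assume "x \<in> {0..<1}"
  then have "0 \<le> \<lfloor>x * real b ^ m\<rfloor>" "\<lfloor>x * real b ^ m\<rfloor> < int (b ^ m)"
    using assms by (auto simp: floor_less_iff)
  then have "nat \<lfloor>x * real b ^ m\<rfloor> < b ^ m" by linarith
  then obtain w where "length w = m" "set w \<subseteq> {..<b}" "bval b w = nat \<lfloor>x * real b ^ m\<rfloor>"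
    using bval_surj[OF assms] by blast
  then show "x \<in> (\<Union>w \<in> words_len b m. cyl b w)"
    using assms \<open>0 \<le> \<lfloor>x * real b ^ m\<rfloor>\<close> by (auto simp: words_len_def mem_cyl_iff_floor)
qed

lemma cyl_in_sets:
  assumes "sets M = sets (restrict_space borel {0..<1::real})" "b > 0" "set w \<subseteq> {..<b}"
  shows "cyl b w \<in> sets M"
  using cyl_subset_unit_interval[OF assms(2,3)]
  by (simp add: assms(1) sets_restrict_space_iff cyl_eq_atLeastLessThan[OF assms(2)])

lemma atLeastLessThan_meets_not_subset:
  fixes a a' p q :: "'a::linorder"
  assumes "{a..<a'} \<inter> {p..<q} \<noteq> {}" "\<not> {a..<a'} \<subseteq> {p..<q}"
  shows "p \<in> {a..<a'} \<or> q \<in> {a..<a'}"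
  using assms by (auto simp: subset_iff)

lemma card_mem_disjoint_family_le_1:
  "\<lbrakk>finite I; disjoint_family_on C I\<rbrakk> \<Longrightarrow> card {i \<in> I. x \<in> C i} \<le> 1"
  unfolding disjoint_family_on_def by (subst One_nat_def, subst card_le_Suc0_iff_eq) auto

lemma card_straddling_intervals_le_2:
  fixes C :: "'i \<Rightarrow> 'a::linorder set"
  assumes "finite I" "disjoint_family_on C I" "\<forall>i\<in>I. \<exists>l r. C i = {l..<r}"
  shows "card {i \<in> I. C i \<inter> {p..<q} \<noteq> {} \<and> \<not> C i \<subseteq> {p..<q}} \<le> 2"
proof -
  have "{i \<in> I. C i \<inter> {p..<q} \<noteq> {} \<and> \<not> C i \<subseteq> {p..<q}} \<subseteq> {i \<in> I. p \<in> C i} \<union> {i \<in> I. q \<in> C i}"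
    using assms(3) atLeastLessThan_meets_not_subset[of _ _ p q] by fastforce
  then have "card {i \<in> I. C i \<inter> {p..<q} \<noteq> {} \<and> \<not> C i \<subseteq> {p..<q}}
      \<le> card {i \<in> I. p \<in> C i} + card {i \<in> I. q \<in> C i}"
    using assms(1) by (intro order_trans[OF card_mono card_Un_le]) auto
  moreover have "card {i \<in> I. p \<in> C i} \<le> 1" "card {i \<in> I. q \<in> C i} \<le> 1"
    using card_mem_disjoint_family_le_1[OF assms(1,2)] by blast+
  ultimately show ?thesis by linarith
qed

lemma measure_eq_sum_cells:
  fixes M :: "'a measure" and C :: "'i \<Rightarrow> 'a set"
  assumes "finite_measure M" "finite I" "disjoint_family_on C I" "\<forall>i\<in>I. C i \<in> sets M"
    "J \<in> sets M" "J \<subseteq> (\<Union>i\<in>I. C i)"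
  shows "measure M J = (\<Sum>i \<in> {i \<in> I. C i \<inter> J \<noteq> {}}. measure M (J \<inter> C i))"
proof -
  interpret finite_measure M by fact
  let ?S = "{i \<in> I. C i \<inter> J \<noteq> {}}"
  have "J = (\<Union>i\<in>?S. J \<inter> C i)" using assms(6) by blast
  moreover have "measure M (\<Union>i\<in>?S. J \<inter> C i) = (\<Sum>i\<in>?S. measure M (J \<inter> C i))"
    using assms(2-5) by (intro finite_measure_finite_Union) (auto simp: disjoint_family_on_def)
  ultimately show ?thesis by simp
qed

lemma sum_cells_meeting_interval_bounds:
  fixes M :: "real measure" and C :: "'i \<Rightarrow> real set"
  assumes "finite_measure M" "finite I" "disjoint_family_on C I"
    and cells: "\<forall>i\<in>I. C i \<in> sets M \<and> (\<exists>l r. C i = {l..<r}) \<and> measure M (C i) \<le> B"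
    and "0 \<le> B" and "{p..<q} \<in> sets M" "{p..<q} \<subseteq> (\<Union>i\<in>I. C i)"
  shows "measure M {p..<q} \<le> (\<Sum>i \<in> {i \<in> I. C i \<inter> {p..<q} \<noteq> {}}. measure M (C i))"
    and "(\<Sum>i \<in> {i \<in> I. C i \<inter> {p..<q} \<noteq> {}}. measure M (C i)) \<le> measure M {p..<q} + 2 * B"
proof -
  interpret finite_measure M by fact
  let ?J = "{p..<q}"
  let ?S = "{i \<in> I. C i \<inter> ?J \<noteq> {}}"
  define excess where "excess i = measure M (C i) - measure M (?J \<inter> C i)" for i
  define E where "E = {i \<in> I. C i \<inter> ?J \<noteq> {} \<and> \<not> C i \<subseteq> ?J}"
  have "measure M ?J = (\<Sum>i\<in>?S. measure M (?J \<inter> C i))"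
    using cells by (intro measure_eq_sum_cells[OF assms(1-3)] assms(6,7)) auto
  then have sum_excess: "(\<Sum>i\<in>?S. measure M (C i)) = measure M ?J + (\<Sum>i\<in>?S. excess i)"
    by (simp add: excess_def sum_subtractf)
  have excess_nonneg: "0 \<le> excess i" if "i \<in> I" for i
  proof -
    have "C i \<in> sets M" using that cells by blast
    then show ?thesis unfolding excess_def using finite_measure_mono[of "?J \<inter> C i" "C i"] by simp
  qed
  have excess_le: "excess i \<le> B" if "i \<in> I" for i
  proof -
    have "measure M (C i) \<le> B" using that cells by blast
    then show ?thesis unfolding excess_def using measure_nonneg[of M "?J \<inter> C i"] by linarith
  qed
  have "card E \<le> 2" unfolding E_def using card_straddling_intervals_le_2[OF assms(2,3)] cells by blast
  have "(\<Sum>i\<in>?S. excess i) = (\<Sum>i\<in>?S \<inter> E. excess i)"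
    using assms(2) by (intro sum.mono_neutral_right) (auto simp: E_def excess_def Int_absorb1)
  also have "\<dots> \<le> real (card (?S \<inter> E)) * B"
    using excess_le by (intro sum_bounded_above) auto
  also have "\<dots> \<le> 2 * B"
  proof -
    have "card (?S \<inter> E) \<le> card E" using assms(2) by (intro card_mono) (auto simp: E_def)
    then show ?thesis using \<open>card E \<le> 2\<close> \<open>0 \<le> B\<close> by (intro mult_right_mono) auto
  qed
  finally show "(\<Sum>i\<in>{i \<in> I. C i \<inter> {p..<q} \<noteq> {}}. measure M (C i)) \<le> measure M {p..<q} + 2 * B"
    using sum_excess by linarith
  show "measure M {p..<q} \<le> (\<Sum>i\<in>{i \<in> I. C i \<inter> {p..<q} \<noteq> {}}. measure M (C i))"
  proof -
    have "0 \<le> (\<Sum>i\<in>?S. excess i)" using excess_nonneg by (intro sum_nonneg) auto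
    then show ?thesis using sum_excess by linarith
  qed
qed

lemma two_power_mult_powr_le_power:
  fixes b m n :: nat and a :: real
  assumes "b \<ge> 2" "n \<ge> 1" "a \<ge> 0" "real n / log 2 (real b) + a * log 2 (real n) \<le> real m"
  shows "2 ^ n * real n powr a \<le> real b ^ m"
proof -
  define L where "L = log 2 (real b)"
  have "1 \<le> L" "0 \<le> log 2 (real n)" using assms(1,2) by (simp_all add: L_def)
  have "2 ^ n * real n powr a = 2 powr (real n + a * log 2 (real n))"
    using assms(2) by (simp add: powr_add powr_realpow powr_powr[symmetric] mult.commute[of a])
  also have "\<dots> \<le> 2 powr (L * (real n / L + a * log 2 (real n)))"
  proof -
    have "1 * (a * log 2 (real n)) \<le> L * (a * log 2 (real n))"
      using \<open>1 \<le> L\<close> \<open>0 \<le> log 2 (real n)\<close> \<open>a \<ge> 0\<close> by (intro mult_right_mono) auto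
    then show ?thesis using \<open>1 \<le> L\<close> by (simp add: distrib_left)
  qed
  also have "\<dots> \<le> 2 powr (L * real m)"
    using \<open>1 \<le> L\<close> assms(4) unfolding L_def by (intro powr_mono) auto
  also have "\<dots> = real b ^ m"
    using assms(1) by (simp add: L_def powr_powr[symmetric] powr_realpow)
  finally show ?thesis .
qed

lemma eventually_scaled_cell_mass_small:
  fixes b :: nat and c :: real
  assumes "b \<ge> 2"
  shows "eventually (\<lambda>n. let m = nat \<lceil>real n / log 2 (real b) + (\<bar>c\<bar> + 5) * log 2 (real n)\<rceil>
           in 1 \<le> m \<and> 2 ^ n * (2 * (real m powr c / real b ^ m)) \<le> 1 / real n ^ 3) sequentially"
proof -
  have "eventually (\<lambda>n::nat. (\<bar>c\<bar> + 5) * log 2 (real n) + 1 \<le> real n) sequentially"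
    and "eventually (\<lambda>n::nat. 2 * 2 powr \<bar>c\<bar> \<le> real n ^ 2) sequentially"
    and "eventually (\<lambda>n::nat. 2 \<le> real n) sequentially" by real_asymp+
  then show ?thesis
  proof eventually_elim
    case (elim n)
    define x where "x = real n / log 2 (real b) + (\<bar>c\<bar> + 5) * log 2 (real n)"
    define m where "m = nat \<lceil>x\<rceil>"
    have "1 \<le> log 2 (real n)" "1 \<le> log 2 (real b)" using elim(3) assms by simp_all
    then have "5 \<le> (\<bar>c\<bar> + 5) * log 2 (real n)" "0 \<le> real n / log 2 (real b)"
      and "real n / log 2 (real b) \<le> real n"
      using mult_mono[of 5 "\<bar>c\<bar> + 5" 1 "log 2 (real n)"] mult_left_mono[of 1 "log 2 (real b)" "real n"]
      by (auto simp: divide_le_eq)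
    then have "5 \<le> x" unfolding x_def by linarith
    then have "real m = of_int \<lceil>x\<rceil>" unfolding m_def by simp
    then have "x \<le> real m" "real m \<le> x + 1" by linarith+
    then have "real m \<le> 2 * real n" "1 \<le> real m"
      using elim(1) \<open>5 \<le> x\<close> \<open>real n / log 2 (real b) \<le> real n\<close> unfolding x_def by linarith+
    have "real m powr c \<le> (2 * real n) powr \<bar>c\<bar>"
      using \<open>1 \<le> real m\<close> \<open>real m \<le> 2 * real n\<close>
      by (intro order_trans[OF powr_mono powr_mono2]) auto
    also have "\<dots> = 2 powr \<bar>c\<bar> * real n powr \<bar>c\<bar>" by (simp add: powr_mult)
    finally have "real m powr c \<le> 2 powr \<bar>c\<bar> * real n powr \<bar>c\<bar>" .
    moreover have "2 ^ n * (real n powr \<bar>c\<bar> * real n ^ 5) \<le> real b ^ m"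
      using two_power_mult_powr_le_power[OF assms, of n "\<bar>c\<bar> + 5" m] elim(3) \<open>x \<le> real m\<close>
      by (simp add: x_def powr_add powr_realpow)
    moreover have "0 < real n powr \<bar>c\<bar>" using elim(3) by simp
    ultimately have "2 ^ n * (2 * (real m powr c / real b ^ m))
        \<le> 2 ^ n * (2 * (2 powr \<bar>c\<bar> * real n powr \<bar>c\<bar> / (2 ^ n * (real n powr \<bar>c\<bar> * real n ^ 5))))"
      using elim(3) by (intro mult_left_mono frac_le) auto
    also have "\<dots> = 2 * 2 powr \<bar>c\<bar> / real n ^ 5"
      using \<open>0 < real n powr \<bar>c\<bar>\<close> by (simp add: field_simps)
    also have "\<dots> \<le> real n ^ 2 / real n ^ 5"
      using elim(2,3) by (intro divide_right_mono) auto
    also have "\<dots> = 1 / real n ^ 3"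
      using elim(3) by (simp add: field_simps)
    finally show ?case using \<open>1 \<le> real m\<close> unfolding m_def x_def Let_def by simp
  qed
qed

lemma gam_le_powr_div_power:
  assumes "\<forall>w \<in> words b. w \<noteq> [] \<longrightarrow> d w \<le> real (length w) powr c" "w \<in> words_len b m" "1 \<le> m"
  shows "gam b d w \<le> real m powr c / real b ^ m"
proof -
  have "w \<in> words b" "length w = m" using assms(2) by (auto simp: words_len_def words_def)
  then have "d w \<le> real m powr c" using assms(1,3) by auto
  moreover have "gam b d w = d w / real b ^ m"
    using \<open>length w = m\<close> by (simp add: gam_def power_int_minus power_int_of_nat divide_inverse)
  ultimately show ?thesis by (simp add: divide_right_mono)
qed

lemma abs_measure_cyl_minus_mu_m_le:
  assumes "finite_measure M" "sets M = sets (restrict_space borel {0..<1::real})"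
    and "b > 0" "set y \<subseteq> {..<2}" "0 \<le> B"
    and gam: "\<forall>w \<in> words_len b m. measure M (cyl b w) = gam b d w \<and> gam b d w \<le> B"
  shows "\<bar>measure M (cyl 2 y) - mu_m b d m y\<bar> \<le> 2 * B"
proof -
  obtain p q where J: "cyl 2 y = {p..<q}" using cyl_eq_atLeastLessThan[of 2 y] by auto
  have cells: "\<forall>w \<in> words_len b m. cyl b w \<in> sets M \<and> (\<exists>l r. cyl b w = {l..<r}) \<and> measure M (cyl b w) \<le> B"
    using gam cyl_in_sets[OF assms(2,3)] cyl_eq_atLeastLessThan[OF \<open>b > 0\<close>] by (auto simp: words_len_def)
  have J_sets: "{p..<q} \<in> sets M" using cyl_in_sets[OF assms(2) _ assms(4)] J by simp
  have J_sub: "{p..<q} \<subseteq> (\<Union>w \<in> words_len b m. cyl b w)"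
    using order_trans[OF cyl_subset_unit_interval[OF _ assms(4)] unit_interval_subset_Union_cyl[OF \<open>b > 0\<close>]] J
    by simp
  have "mu_m b d m y = (\<Sum>w \<in> {w \<in> words_len b m. cyl b w \<inter> {p..<q} \<noteq> {}}. measure M (cyl b w))"
    using gam by (auto simp: mu_m_def J intro!: sum.cong)
  then show ?thesis
    using sum_cells_meeting_interval_bounds[OF assms(1) finite_words_len disjoint_family_cyl[OF \<open>b > 0\<close>]
        cells \<open>0 \<le> B\<close> J_sets J_sub]
    unfolding J abs_le_iff by linarith
qed

theorem mainTheorem8:
  fixes b :: nat and d :: "nat list \<Rightarrow> real" and c :: real and M :: "real measure"
  assumes "b \<ge> 2"
    and "martingale b d"
    and "d [] = 1"
    and "\<forall>w \<in> words b. w \<noteq> [] \<longrightarrow> d w \<le> real (length w) powr c"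
    and "prob_space M"
    and "sets M = sets (restrict_space borel {0..<1::real})"
    and "\<forall>w \<in> words b. measure M (cyl b w) = gam b d w"
  shows "\<exists>c' > 0. \<exists>N. \<forall>y \<in> words 2. length y \<ge> N \<longrightarrow>
           (let m = nat \<lceil>real (length y) / log 2 (real b) + c' * log 2 (real (length y))\<rceil>
            in \<bar>2 ^ length y * measure M (cyl 2 y) - 2 ^ length y * mu_m b d m y\<bar>
                 \<le> 1 / real (length y) ^ 3)"
proof -
  interpret prob_space M by fact
  obtain N where N: "\<And>n. n \<ge> N \<Longrightarrow> let m = nat \<lceil>real n / log 2 (real b) + (\<bar>c\<bar> + 5) * log 2 (real n)\<rceil>
      in 1 \<le> m \<and> 2 ^ n * (2 * (real m powr c / real b ^ m)) \<le> 1 / real n ^ 3"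
    using eventually_scaled_cell_mass_small[OF assms(1), of c] unfolding eventually_sequentially by blast
  show ?thesis
  proof (intro exI[of _ "\<bar>c\<bar> + 5"] conjI exI[of _ N] ballI impI)
    show "0 < \<bar>c\<bar> + 5" by simp
    fix y assume y: "y \<in> words 2" "N \<le> length y"
    define n where "n = length y"
    define m where "m = nat \<lceil>real n / log 2 (real b) + (\<bar>c\<bar> + 5) * log 2 (real n)\<rceil>"
    define B where "B = real m powr c / real b ^ m"
    have "1 \<le> m" and scaled: "2 ^ n * (2 * B) \<le> 1 / real n ^ 3"
      using N[OF y(2)] by (simp_all add: Let_def m_def n_def B_def)
    have "\<forall>w \<in> words_len b m. gam b d w \<le> B"
      using gam_le_powr_div_power[OF assms(4) _ \<open>1 \<le> m\<close>] by (simp add: B_def)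
    moreover have "set y \<subseteq> {..<2}" "0 \<le> B" "b > 0" using y(1) assms(1) by (auto simp: words_def B_def)
    ultimately have "\<bar>measure M (cyl 2 y) - mu_m b d m y\<bar> \<le> 2 * B"
      using assms(7) abs_measure_cyl_minus_mu_m_le[OF finite_measure_axioms assms(6)]
      by (auto simp: words_def words_len_def)
    then have "\<bar>2 ^ n * measure M (cyl 2 y) - 2 ^ n * mu_m b d m y\<bar> \<le> 2 ^ n * (2 * B)"
      by (simp add: right_diff_distrib[symmetric] abs_mult)
    with scaled show "let m = nat \<lceil>real (length y) / log 2 (real b) + (\<bar>c\<bar> + 5) * log 2 (real (length y))\<rceil>
        in \<bar>2 ^ length y * measure M (cyl 2 y) - 2 ^ length y * mu_m b d m y\<bar> \<le> 1 / real (length y) ^ 3"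
      by (simp add: Let_def m_def n_def)
  qed
qed

end
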